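(* Consider the constrained decoding algorithm below, run with a language model $\mathsf{lm}$ and an AST predicate $\varphi$, using a function $\mathsf{realizable}$ that is under-approximate or consistent (definitions in the context). Then constrained decoding is sound: whenever the algorithm returns a string $\omega$ (rather than $\bot$), we have $\varphi(\mathsf{parse}(\omega))$.
   Context: Let $\Sigma$ be a finite alphabet, $\mathsf{AST}$ a set of abstract syntax trees, and $\mathsf{parse}\colon \Sigma^*\to\mathsf{AST}\cup\{\bot\}$ a parsing function. A semantic constraint is a predicate $\varphi\colon\mathsf{AST}\to\mathrm{bool}$ (taken false on $\bot$). A token vocabulary $\mathcal{T}$ is a set of finite strings over $\Sigma$ such that every string in $\Sigma^*$ is a concatenation of tokens; it contains a distinguished one-character token $\mathsf{END}$. Token sequences are identified with the strings they concatenate to. It is assumed that every string satisfying the constraint contains $\mathsf{END}$ exactly once, as its last character: if $\varphi(\mathsf{parse}(\omega))$ then $\omega$ ends with $\mathsf{END}$ and $\mathsf{END}$ does not occur earlier in $\omega$. A language model is a function $\mathsf{lm}\colon\mathcal{T}^*\to\mathcal{T}\to[0,1]$. Constrained decoding algorithm: initialize a worklist (an abstract queue data structure with operations enqueue/dequeue, whose order may depend on the supplied probabilities) to contain only the empty string $\epsilon$. While the worklist is nonempty: dequeue a string $\omega$; for each $\tau\in\mathcal{T}$, if $\mathsf{realizable}(\omega\tau,\varphi)$ holds then, if $\tau=\mathsf{END}$, return $\omega\tau$; otherwise enqueue $\omega\tau$ with priority $\mathsf{lm}(\omega,\tau)$. If the worklist becomes empty, return $\bot$. A realizability checker $\mathsf{realizable}(\omega,\varphi)$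 is under-approximate if $\mathsf{realizable}(\omega,\varphi)\Rightarrow\exists\omega'\in\Sigma^*.\ \varphi(\mathsf{parse}(\omega\omega'))$ for all $\omega$; it is consistent if for every $\omega$ whose last character is $\mathsf{END}$, $\mathsf{realizable}(\omega,\varphi)\Leftrightarrow\varphi(\mathsf{parse}(\omega))$. *)

theory Defs
  imports Complex_Main "HOL-Library.Multiset"
begin

text \<open>Strings over the alphabet are lists of characters of type 'c.
  The parser returns None for the failure value (bottom).\<close>

definition sat :: "('c list \<Rightarrow> 'ast option) \<Rightarrow> ('ast \<Rightarrow> bool) \<Rightarrow> 'c list \<Rightarrow> bool" where
  "sat parse \<phi> w = (case parse w of None \<Rightarrow> False | Some a \<Rightarrow> \<phi> a)"

definition token_vocabulary :: "'c list set \<Rightarrow> bool" where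
  "token_vocabulary T = (\<forall>w. \<exists>ts. set ts \<subseteq> T \<and> concat ts = w)"

definition under_approximate ::
  "('c list \<Rightarrow> 'ast option) \<Rightarrow> ('c list \<Rightarrow> ('ast \<Rightarrow> bool) \<Rightarrow> bool) \<Rightarrow> ('ast \<Rightarrow> bool) \<Rightarrow> bool" where
  "under_approximate parse realizable \<phi> =
     (\<forall>w. realizable w \<phi> \<longrightarrow> (\<exists>w'. sat parse \<phi> (w @ w')))"

text \<open>END is the one-character token [e].\<close>
definition consistent ::
  "('c list \<Rightarrow> 'ast option) \<Rightarrow> ('c list \<Rightarrow> ('ast \<Rightarrow> bool) \<Rightarrow> bool) \<Rightarrow> ('ast \<Rightarrow> bool) \<Rightarrow> 'c \<Rightarrow> bool" where
  "consistent parse realizable \<phi> e =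
     (\<forall>w. w \<noteq> [] \<and> last w = e \<longrightarrow> (realizable w \<phi> \<longleftrightarrow> sat parse \<phi> w))"

text \<open>The worklist is a multiset of
  (string, priority) pairs; the dequeue operation may pick ANY element, which
  covers every queue discipline (in particular every priority-dependent one).\<close>
datatype ('c) config =
    Running "('c list \<times> real) multiset"
  | Returned "'c list"
  | Failed

text \<open>If
  \<omega>END is realizable the loop returns it (enqueues performed before reaching END
  in the scan are irrelevant since the algorithm stops); otherwise every
  realizable extension \<omega>\<tau> (\<tau> \<noteq> END) is enqueued with priority lm \<omega> \<tau>.\<close>
inductive decode_step ::
  "'c list set \<Rightarrow> 'c \<Rightarrow> ('c list \<Rightarrow> 'c list \<Rightarrow> real) \<Rightarrow>
   ('c list \<Rightarrow> ('ast \<Rightarrow> bool) \<Rightarrow> bool) \<Rightarrow> ('ast \<Rightarrow> bool) \<Rightarrow>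
   'c config \<Rightarrow> 'c config \<Rightarrow> bool"
  for T e lm realizable \<phi> where
  ret: "x \<in># W \<Longrightarrow> realizable (fst x @ [e]) \<phi> \<Longrightarrow>
        decode_step T e lm realizable \<phi> (Running W) (Returned (fst x @ [e]))"
| cont: "x \<in># W \<Longrightarrow> \<not> realizable (fst x @ [e]) \<phi> \<Longrightarrow>
        decode_step T e lm realizable \<phi> (Running W)
          (Running (W - {#x#} +
             image_mset (\<lambda>\<tau>. (fst x @ \<tau>, lm (fst x) \<tau>))
               (mset_set {\<tau> \<in> T. \<tau> \<noteq> [e] \<and> realizable (fst x @ \<tau>) \<phi>})))"
| fail: "decode_step T e lm realizable \<phi> (Running {#}) Failed"

end

theory Submission
  imports Defs
begin

(* The algorithm only ever returns a string \<omega> @ [END] after checking that it is realizable.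
   A consistent checker then decides the constraint exactly on such strings.  An
   under-approximate one only promises a satisfying extension \<omega> @ [END] @ w'; but
   satisfying strings contain END exactly once, as their last character, so w' = []. *)

lemma decode_step_Returned:
  assumes "decode_step T e lm realizable \<phi> c (Returned w)"
  shows "realizable w \<phi> \<and> (\<exists>x. w = x @ [e])"
  using assms by (cases rule: decode_step.cases) auto

lemma decode_steps_Returned:
  assumes "(decode_step T e lm realizable \<phi>)\<^sup>*\<^sup>* (Running W) (Returned w)"
  shows "realizable w \<phi> \<and> (\<exists>x. w = x @ [e])"
  using assms by (cases rule: rtranclp.cases) (auto dest: decode_step_Returned)

lemma append_end_marker_eq_Nil:
  assumes "x @ [e] @ u = v @ [e]" and "e \<notin> set v"
  shows "u = []"
proof (rule ccontr)
  assume "u \<noteq> []"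
  then have "v = x @ [e] @ butlast u"
    using assms(1) by (metis append.assoc append_butlast_last_id butlast_append butlast_snoc)
  with assms(2) show False by simp
qed

lemma under_approximate_realizable_end_sat:
  assumes "under_approximate parse realizable \<phi>"
    and end_marker: "\<forall>w. sat parse \<phi> w \<longrightarrow> (\<exists>w'. w = w' @ [e] \<and> e \<notin> set w')"
    and "realizable (x @ [e]) \<phi>"
  shows "sat parse \<phi> (x @ [e])"
proof -
  obtain u where sat_ext: "sat parse \<phi> (x @ [e] @ u)"
    using assms(1,3) unfolding under_approximate_def by fastforce
  then obtain v where "x @ [e] @ u = v @ [e]" and "e \<notin> set v"
    using end_marker by blast
  then have "u = []"
    by (rule append_end_marker_eq_Nil)
  with sat_ext show ?thesis by simp
qed

lemma consistent_realizable_end_sat: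
  assumes "consistent parse realizable \<phi> e" and "realizable (x @ [e]) \<phi>"
  shows "sat parse \<phi> (x @ [e])"
  using assms unfolding consistent_def by simp

theorem mainTheorem1:
  fixes T :: "'c list set" and e :: 'c
    and parse :: "'c list \<Rightarrow> 'ast option" and \<phi> :: "'ast \<Rightarrow> bool"
    and lm :: "'c list \<Rightarrow> 'c list \<Rightarrow> real"
    and realizable :: "'c list \<Rightarrow> ('ast \<Rightarrow> bool) \<Rightarrow> bool"
    and p0 :: real and \<omega> :: "'c list"
  assumes "finite T"
    and "token_vocabulary T"
    and "[e] \<in> T"
    and "\<forall>w. sat parse \<phi> w \<longrightarrow> (\<exists>w'. w = w' @ [e] \<and> e \<notin> set w')"
    and "\<forall>w \<tau>. 0 \<le> lm w \<tau> \<and> lm w \<tau> \<le> 1"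
    and "under_approximate parse realizable \<phi> \<or> consistent parse realizable \<phi> e"
    and "(decode_step T e lm realizable \<phi>)\<^sup>*\<^sup>* (Running {#([], p0)#}) (Returned \<omega>)"
  shows "sat parse \<phi> \<omega>"
proof -
  obtain x where realizable: "realizable (x @ [e]) \<phi>" and \<omega>: "\<omega> = x @ [e]"
    using decode_steps_Returned[OF assms(7)] by blast
  from assms(6) have "sat parse \<phi> (x @ [e])"
  proof
    assume "under_approximate parse realizable \<phi>"
    then show ?thesis
      using assms(4) realizable by (rule under_approximate_realizable_end_sat)
  next
    assume "consistent parse realizable \<phi> e"
    then show ?thesis
      using realizable by (rule consistent_realizable_end_sat)
  qed
  with \<omega> show ?thesis by simp
qed

end
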